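(* Let $X_0^*$ be a $\{1,2,\dots\}$-valued random variable with $\mathbf P(X_0^*\ge2)>0$ and $\mathbf E(X_0^*m^{X_0^*})<\infty$, let $p>p_c$, let $X_0$ have law $(1-p)\delta_0+pP_{X_0^*}$, and let $n\ge0$. Then $$[\delta_n-\varphi_n(s)]^2\le 2\,(H_n(0)+\delta_n)\,\Theta_n(s),\qquad s\in(0,m).$$
   Context: Fix an integer $m\ge2$. Recursive system: $X_{n+1}$ has the law of $(X_{n,1}+\cdots+X_{n,m}-1)^+$, with $X_{n,i}$ independent copies of $X_n$. $p_c:=\frac{1}{1+\mathbf E\{[(m-1)X_0^*-1]m^{X_0^*}\}}$. $H_n(s):=\mathbf E(s^{X_n})$; $\delta_n:=(m-1)\mathbf E(X_nm^{X_n})-\mathbf E(m^{X_n})$; $\varphi_n(s):=(m-1)sH_n'(s)-H_n(s)$; and $$\Theta_n(s):=[H_n(s)-s(s-1)H_n'(s)]-\frac{(m-1)(m-s)}{m}[2sH_n'(s)+s^2H_n''(s)]+\delta_n .$$ *)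

theory Defs
  imports "HOL-Probability.Probability"
begin

primrec sum_law :: "nat \<Rightarrow> nat pmf \<Rightarrow> nat pmf" where
  "sum_law 0 mu = return_pmf 0"
| "sum_law (Suc k) mu = bind_pmf mu (\<lambda>x. map_pmf (\<lambda>y. x + y) (sum_law k mu))"

text \<open>Law of X_n in the recursive system with parameter m, started from the law mu0 of X_0:
  X_{n+1} has the law of (X_{n,1}+...+X_{n,m}-1)^+ (truncated nat subtraction).\<close>
primrec sys_law :: "nat \<Rightarrow> nat pmf \<Rightarrow> nat \<Rightarrow> nat pmf" where
  "sys_law m mu0 0 = mu0"
| "sys_law m mu0 (Suc n) = map_pmf (\<lambda>y. y - 1) (sum_law m (sys_law m mu0 n))"

definition init_law :: "real \<Rightarrow> nat pmf \<Rightarrow> nat pmf" where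
  "init_law p Xs = bind_pmf (bernoulli_pmf p) (\<lambda>b. if b then Xs else return_pmf 0)"

definition p_crit :: "nat \<Rightarrow> nat pmf \<Rightarrow> real" where
  "p_crit m Xs = 1 / (1 + measure_pmf.expectation Xs
      (\<lambda>k. ((real m - 1) * real k - 1) * real m ^ k))"

definition Hgf :: "nat pmf \<Rightarrow> real \<Rightarrow> real" where
  "Hgf mu s = measure_pmf.expectation mu (\<lambda>k. s ^ k)"

definition delta_c :: "nat \<Rightarrow> nat pmf \<Rightarrow> real" where
  "delta_c m mu = (real m - 1) * measure_pmf.expectation mu (\<lambda>k. real k * real m ^ k)
      - measure_pmf.expectation mu (\<lambda>k. real m ^ k)"

definition phi_c :: "nat \<Rightarrow> nat pmf \<Rightarrow> real \<Rightarrow> real" where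
  "phi_c m mu s = (real m - 1) * s * deriv (Hgf mu) s - Hgf mu s"

definition Theta_c :: "nat \<Rightarrow> nat pmf \<Rightarrow> real \<Rightarrow> real" where
  "Theta_c m mu s = (Hgf mu s - s * (s - 1) * deriv (Hgf mu) s)
      - (real m - 1) * (real m - s) / real m
          * (2 * s * deriv (Hgf mu) s + s^2 * deriv (deriv (Hgf mu)) s)
      + delta_c m mu"

end

theory Submission
  imports Defs
begin

text \<open>
  Every quantity in the inequality is linear in the law of X_n: with a_k = P(X_n = k), the
  power series of H_n converges on |s| <= m, so s H_n'(s) = \<Sum> a_k k s^k and
  s^2 H_n''(s) = \<Sum> a_k k (k-1) s^k. Hence the quadratic
  Q(t) = 2 t^2 (H_n(0) + \<delta>_n) - 2 t (\<delta>_n - \<phi>_n(s)) + \<Theta>_n(s)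
  is the a_k-average of the same quadratic for the point masses at k. For k >= 1 and x = s/m
  the latter equals ((m-1) k - 1) m^k (2 t^2 - 2 t u + g) with u = 1 - x^k and
  g = 1 - (k+1) x^k + k x^(k+1), which is nonnegative because u^2 <= 2 g on [0,1].
  So Q >= 0 for all t, and the discriminant condition is the claim.
  The only property of X_n needed is E(X_n m^X_n) < \<infinity>, which propagates along the
  recursion because the weight (k+1) m^k is increasing and submultiplicative.
\<close>

lemma power_le_one_plus_times_power:
  fixes M :: real
  assumes "M \<ge> 1"
  shows "M ^ k \<le> 1 + real k * M ^ k"
  using assms by (cases k) (simp_all add: algebra_simps)

lemma one_minus_power_sq_le:
  fixes x :: real
  assumes x0: "0 \<le> x" and x1: "x \<le> 1"
  shows "(1 - x ^ k)^2 \<le> 2 * (1 - (real k + 1) * x ^ k + real k * x ^ (k + 1))"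
proof (cases k)
  case 0
  then show ?thesis by simp
next
  case (Suc j)
  define f where "f y = 2 * (1 - (real k + 1) * y ^ k + real k * y ^ (k + 1)) - (1 - y ^ k)^2"
    for y :: real
  define f' where "f' y = - 2 * real k * y ^ j * (real k - (real k + 1) * y + y ^ k)" for y :: real
  have f': "(f has_real_derivative f' y) (at y)" for y
  proof -
    have "(f has_real_derivative
        2 * (- (real k + 1) * (real k * y ^ j) + real k * ((real k + 1) * y ^ k))
          - 2 * (1 - y ^ k) * (- (real k * y ^ j))) (at y)"
      unfolding f_def by (rule derivative_eq_intros refl | simp add: Suc algebra_simps)+
    then show ?thesis
      by (simp add: f'_def Suc algebra_simps)
  qed
  have "f' y \<le> 0" if "0 \<le> y" "y \<le> 1" for y
  proof -
    have "1 + real k * (y - 1) \<le> (1 + (y - 1)) ^ k"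
      using that by (intro Bernoulli_inequality) simp
    then have "0 \<le> real k - (real k + 1) * y + y ^ k"
      using that by (simp add: algebra_simps)
    then show ?thesis
      using that by (simp add: f'_def)
  qed
  then have "f 1 \<le> f x"
    using f' x0 x1 by (intro DERIV_nonpos_imp_nonincreasing[OF x1]) fastforce
  then show ?thesis by (simp add: f_def)
qed

lemma quadratic_nonneg_imp_discriminant_le:
  fixes a b c :: real
  assumes nonneg: "\<And>t. 0 \<le> t^2 * a - 2 * t * b + c" and "0 \<le> a"
  shows "b^2 \<le> a * c"
proof (cases "a = 0")
  case True
  have "b = 0"
  proof (rule ccontr)
    assume "b \<noteq> 0"
    then show False
      using nonneg[of "(c + 1) / (2 * b)"] True by simp
  qed
  then show ?thesis
    using nonneg[of 0] True by simp
next
  case False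
  with \<open>0 \<le> a\<close> have "a > 0" by simp
  have "0 \<le> (b / a)^2 * a - 2 * (b / a) * b + c"
    by (rule nonneg)
  also have "\<dots> = c - b^2 / a"
    using \<open>a > 0\<close> by (simp add: power2_eq_square field_simps)
  finally show ?thesis
    using \<open>a > 0\<close> by (simp add: field_simps)
qed

lemma power_series_deriv_sums:
  fixes a :: "nat \<Rightarrow> 'a::{real_normed_field,banach}"
  assumes f: "\<And>z. norm z < R \<Longrightarrow> (\<lambda>n. a n * z ^ n) sums f z" and z: "norm z < R"
  shows "(\<lambda>n. diffs a n * z ^ n) sums deriv f z"
proof -
  have "(f has_field_derivative (\<Sum>n. diffs a n * z ^ n)) (at z)"
  proof (rule has_field_derivative_transform_within_open)
    show "((\<lambda>z. \<Sum>n. a n * z ^ n) has_field_derivative (\<Sum>n. diffs a n * z ^ n)) (at z)"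
      using f sums_summable by (intro termdiffs_strong'[OF _ z]) blast
    show "(\<Sum>n. a n * x ^ n) = f x" if "x \<in> ball 0 R" for x
      using f[of x] that by (simp add: sums_iff)
  qed (use z in auto)
  then show ?thesis
    using termdiffs_sums_strong[OF f _ z] DERIV_imp_deriv by metis
qed

lemma power_series_times_deriv_sums:
  fixes a :: "nat \<Rightarrow> 'a::{real_normed_field,banach}"
  assumes f: "\<And>z. norm z < R \<Longrightarrow> (\<lambda>n. a n * z ^ n) sums f z" and z: "norm z < R"
  shows "(\<lambda>n. a n * (of_nat n * z ^ n)) sums (z * deriv f z)"
proof -
  have "(\<lambda>n. z * (of_nat n * a n * z ^ (n - 1))) sums (z * deriv f z)"
    using diffs_equiv[OF sums_summable[OF power_series_deriv_sums[OF f z]]]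
      power_series_deriv_sums[OF f z] by (intro sums_mult) (simp add: sums_iff)
  moreover have "(\<lambda>n. z * (of_nat n * a n * z ^ (n - 1))) = (\<lambda>n. a n * (of_nat n * z ^ n))"
  proof
    show "z * (of_nat n * a n * z ^ (n - 1)) = a n * (of_nat n * z ^ n)" for n
      by (cases n) (simp_all add: algebra_simps)
  qed
  ultimately show ?thesis by simp
qed

lemma power_series_second_deriv_sums:
  fixes a :: "nat \<Rightarrow> 'a::{real_normed_field,banach}"
  assumes f: "\<And>z. norm z < R \<Longrightarrow> (\<lambda>n. a n * z ^ n) sums f z" and z: "norm z < R"
  shows "(\<lambda>n. a n * (of_nat n * (of_nat n - 1) * z ^ n)) sums (z^2 * deriv (deriv f) z)"
proof -
  define g where "g n = a n * (of_nat n * (of_nat n - 1) * z ^ n)" for n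
  have "(\<lambda>n. diffs a n * (of_nat n * z ^ n)) sums (z * deriv (deriv f) z)"
    using power_series_deriv_sums[OF f] z by (rule power_series_times_deriv_sums)
  then have "(\<lambda>n. z * (diffs a n * (of_nat n * z ^ n))) sums (z^2 * deriv (deriv f) z)"
    using sums_mult[of _ "z * deriv (deriv f) z" z] by (simp add: power2_eq_square mult.assoc)
  moreover have "(\<lambda>n. z * (diffs a n * (of_nat n * z ^ n))) = (\<lambda>n. g (Suc n))"
    by (simp add: g_def diffs_def algebra_simps)
  ultimately have "g sums (z^2 * deriv (deriv f) z + g 0)"
    by (simp add: sums_Suc_iff)
  then show ?thesis by (simp add: g_def [abs_def])
qed

text \<open>The values of \<open>delta_c\<close>, \<open>phi_c\<close> and \<open>Theta_c\<close> at the point mass at \<open>k\<close>, with \<open>M = m\<close>.\<close>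

definition point_delta :: "real \<Rightarrow> nat \<Rightarrow> real" where
  "point_delta M k = ((M - 1) * real k - 1) * M ^ k"

definition point_phi :: "real \<Rightarrow> real \<Rightarrow> nat \<Rightarrow> real" where
  "point_phi M s k = ((M - 1) * real k - 1) * s ^ k"

definition point_Theta :: "real \<Rightarrow> real \<Rightarrow> nat \<Rightarrow> real" where
  "point_Theta M s k = s ^ k - (s - 1) * real k * s ^ k
     - (M - 1) * (M - s) / M * (real k * (real k + 1) * s ^ k) + point_delta M k"

lemma point_delta_factor_nonneg:
  fixes M :: real
  assumes "M \<ge> 2" "k > 0"
  shows "0 \<le> (M - 1) * real k - 1"
proof -
  have "1 * 1 \<le> (M - 1) * real k"
    using assms by (intro mult_mono) auto
  then show ?thesis by simp
qed

lemma zero_power_plus_point_delta_nonneg: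
  fixes M :: real
  assumes "M \<ge> 2"
  shows "0 \<le> 0 ^ k + point_delta M k"
  using point_delta_factor_nonneg[OF assms, of k] assms
  by (cases "k = 0") (simp_all add: point_delta_def)

lemma point_quadratic_nonneg:
  fixes M s t :: real
  assumes M: "M \<ge> 2" and s: "0 < s" "s < M"
  shows "0 \<le> t^2 * (2 * (0 ^ k + point_delta M k)) - 2 * t * (point_delta M k - point_phi M s k)
           + point_Theta M s k"
proof (cases "k = 0")
  case True
  then show ?thesis by (simp add: point_delta_def point_phi_def point_Theta_def)
next
  case False
  define x where "x = s / M"
  define u where "u = 1 - x ^ k"
  define g where "g = 1 - (real k + 1) * x ^ k + real k * x ^ (k + 1)"
  have x: "0 \<le> x" "x \<le> 1" and s_eq: "s = M * x"
    using M s by (auto simp: x_def)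
  have "t^2 * (2 * (0 ^ k + point_delta M k)) - 2 * t * (point_delta M k - point_phi M s k)
          + point_Theta M s k
      = ((M - 1) * real k - 1) * M ^ k * (2 * t^2 - 2 * t * u + g)"
    using False M
    by (simp add: point_delta_def point_phi_def point_Theta_def s_eq u_def g_def power_mult_distrib
        field_simps)
  moreover have "0 \<le> 2 * t^2 - 2 * t * u + g"
  proof -
    have "2 * t^2 - 2 * t * u + g = 2 * (t - u / 2)^2 + (g - u^2 / 2)"
      by (simp add: power2_eq_square algebra_simps)
    moreover have "u^2 \<le> 2 * g"
      using one_minus_power_sq_le[OF x, of k] by (simp add: u_def g_def)
    moreover have "0 \<le> (t - u / 2)^2"
      by simp
    ultimately show ?thesis
      by linarith
  qed
  ultimately show ?thesis
    using point_delta_factor_nonneg[OF M] False M by simp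
qed

lemma expectation_sums:
  fixes f :: "nat \<Rightarrow> real"
  assumes "integrable (measure_pmf mu) f"
  shows "(\<lambda>k. pmf mu k * f k) sums measure_pmf.expectation mu f"
proof -
  have "integrable (count_space UNIV) (\<lambda>k. pmf mu k * f k)"
    using assms unfolding measure_pmf_eq_density by (subst (asm) integrable_density) auto
  moreover have "measure_pmf.expectation mu f = integral\<^sup>L (count_space UNIV) (\<lambda>k. pmf mu k * f k)"
    unfolding measure_pmf_eq_density by (subst integral_density) auto
  ultimately show ?thesis
    by (simp add: sums_integral_count_space_nat)
qed

context
  fixes m :: nat and mu :: "nat pmf"
  assumes m: "m \<ge> 2"
    and integrable_weight: "integrable (measure_pmf mu) (\<lambda>k. real k * real m ^ k)"
begin

lemma integrable_power: "integrable (measure_pmf mu) (\<lambda>k. real m ^ k)"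
proof (rule Bochner_Integration.integrable_bound)
  show "integrable (measure_pmf mu) (\<lambda>k. 1 + real k * real m ^ k)"
    using integrable_weight by simp
  show "AE k in measure_pmf mu. norm (real m ^ k) \<le> norm (1 + real k * real m ^ k)"
    using power_le_one_plus_times_power[of "real m"] m by simp
qed simp

lemma Hgf_sums:
  assumes "\<bar>x\<bar> \<le> real m"
  shows "(\<lambda>k. pmf mu k * x ^ k) sums Hgf mu x"
proof -
  have "integrable (measure_pmf mu) (\<lambda>k. x ^ k)"
  proof (rule Bochner_Integration.integrable_bound[OF integrable_power])
    show "AE k in measure_pmf mu. norm (x ^ k) \<le> norm (real m ^ k)"
      using assms by (simp add: power_abs power_mono)
  qed simp
  then show ?thesis
    unfolding Hgf_def by (rule expectation_sums)
qed

lemma Hgf_power_series: "norm z < real m \<Longrightarrow> (\<lambda>k. pmf mu k * z ^ k) sums Hgf mu z"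
  by (simp add: Hgf_sums)

lemma delta_c_sums: "(\<lambda>k. pmf mu k * point_delta (real m) k) sums delta_c m mu"
proof -
  have "(\<lambda>k. (real m - 1) * (pmf mu k * (real k * real m ^ k)) - pmf mu k * real m ^ k)
      sums delta_c m mu"
    unfolding delta_c_def
    by (intro sums_diff sums_mult expectation_sums integrable_weight integrable_power)
  then show ?thesis
    by (simp add: point_delta_def algebra_simps)
qed

lemma Hgf_zero_plus_delta_c_nonneg: "0 \<le> Hgf mu 0 + delta_c m mu"
proof (rule sums_le[OF _ sums_zero sums_add[OF Hgf_power_series delta_c_sums]])
  show "0 \<le> pmf mu k * 0 ^ k + pmf mu k * point_delta (real m) k" for k
  proof -
    have "0 \<le> pmf mu k * (0 ^ k + point_delta (real m) k)"
      using m by (intro mult_nonneg_nonneg pmf_nonneg zero_power_plus_point_delta_nonneg) simp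
    then show ?thesis
      by (simp only: distrib_left)
  qed
qed (use m in simp)

context
  fixes s :: real
  assumes s: "0 < s" "s < real m"
begin

lemma phi_c_sums: "(\<lambda>k. pmf mu k * point_phi (real m) s k) sums phi_c m mu s"
proof -
  have "(\<lambda>k. (real m - 1) * (pmf mu k * (real k * s ^ k)) - pmf mu k * s ^ k)
      sums ((real m - 1) * (s * deriv (Hgf mu) s) - Hgf mu s)"
    using s
    by (intro sums_diff sums_mult Hgf_sums power_series_times_deriv_sums[OF Hgf_power_series]) auto
  then show ?thesis
    by (simp add: point_phi_def phi_c_def algebra_simps)
qed

lemma Theta_c_sums: "(\<lambda>k. pmf mu k * point_Theta (real m) s k) sums Theta_c m mu s"
proof -
  define c where "c = (real m - 1) * (real m - s) / real m"
  have "(\<lambda>k. pmf mu k * s ^ k - (s - 1) * (pmf mu k * (real k * s ^ k))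
        - c * (2 * (pmf mu k * (real k * s ^ k)) + pmf mu k * (real k * (real k - 1) * s ^ k))
        + pmf mu k * point_delta (real m) k)
      sums (Hgf mu s - (s - 1) * (s * deriv (Hgf mu) s)
        - c * (2 * (s * deriv (Hgf mu) s) + s^2 * deriv (deriv (Hgf mu)) s) + delta_c m mu)"
    using s
    by (intro sums_add sums_diff sums_mult Hgf_sums delta_c_sums
        power_series_times_deriv_sums[OF Hgf_power_series]
        power_series_second_deriv_sums[OF Hgf_power_series]) auto
  then show ?thesis
    unfolding point_Theta_def Theta_c_def c_def[symmetric] by (simp add: algebra_simps)
qed

lemma quadratic_form_nonneg:
  "0 \<le> t^2 * (2 * (Hgf mu 0 + delta_c m mu)) - 2 * t * (delta_c m mu - phi_c m mu s)
      + Theta_c m mu s"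
proof (rule sums_le[OF _ sums_zero])
  have H0: "(\<lambda>k. pmf mu k * 0 ^ k) sums Hgf mu 0"
    using m by (intro Hgf_power_series) simp
  show "(\<lambda>k. t^2 * (2 * (pmf mu k * 0 ^ k + pmf mu k * point_delta (real m) k))
      - 2 * t * (pmf mu k * point_delta (real m) k - pmf mu k * point_phi (real m) s k)
      + pmf mu k * point_Theta (real m) s k)
    sums (t^2 * (2 * (Hgf mu 0 + delta_c m mu)) - 2 * t * (delta_c m mu - phi_c m mu s)
      + Theta_c m mu s)"
    using sums_add[OF sums_diff[OF
        sums_mult[OF sums_mult[OF sums_add[OF H0 delta_c_sums], of 2], of "t^2"]
        sums_mult[OF sums_diff[OF delta_c_sums phi_c_sums], of "2 * t"]] Theta_c_sums]
    by (simp del: power_0_left)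
  show "0 \<le> t^2 * (2 * (pmf mu k * 0 ^ k + pmf mu k * point_delta (real m) k))
      - 2 * t * (pmf mu k * point_delta (real m) k - pmf mu k * point_phi (real m) s k)
      + pmf mu k * point_Theta (real m) s k" for k
  proof -
    have "0 \<le> pmf mu k * (t^2 * (2 * (0 ^ k + point_delta (real m) k))
        - 2 * t * (point_delta (real m) k - point_phi (real m) s k) + point_Theta (real m) s k)"
      using m s by (intro mult_nonneg_nonneg pmf_nonneg point_quadratic_nonneg) auto
    then show ?thesis
      by (simp add: algebra_simps del: power_0_left)
  qed
qed

lemma delta_phi_sq_le_Theta:
  "(delta_c m mu - phi_c m mu s)^2 \<le> 2 * (Hgf mu 0 + delta_c m mu) * Theta_c m mu s"
  using Hgf_zero_plus_delta_c_nonneg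
  by (intro quadratic_nonneg_imp_discriminant_le quadratic_form_nonneg) simp

end

end

lemma nn_integral_sum_law_finite:
  fixes F :: "nat \<Rightarrow> ennreal"
  assumes submult: "\<And>x y. F (x + y) \<le> F x * F y" and "F 0 < \<infinity>"
    and finite: "(\<integral>\<^sup>+x. F x \<partial>measure_pmf mu) < \<infinity>"
  shows "(\<integral>\<^sup>+x. F x \<partial>measure_pmf (sum_law k mu)) < \<infinity>"
proof (induction k)
  case 0
  then show ?case using \<open>F 0 < \<infinity>\<close> by simp
next
  case (Suc k)
  have "(\<integral>\<^sup>+x. F x \<partial>measure_pmf (sum_law (Suc k) mu))
      = (\<integral>\<^sup>+x. \<integral>\<^sup>+y. F (x + y) \<partial>measure_pmf (sum_law k mu) \<partial>measure_pmf mu)"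
    by simp
  also have "\<dots> \<le> (\<integral>\<^sup>+x. F x * (\<integral>\<^sup>+y. F y \<partial>measure_pmf (sum_law k mu)) \<partial>measure_pmf mu)"
    by (intro nn_integral_mono) (simp add: nn_integral_cmult[symmetric] nn_integral_mono submult)
  also have "\<dots> = (\<integral>\<^sup>+x. F x \<partial>measure_pmf mu) * (\<integral>\<^sup>+y. F y \<partial>measure_pmf (sum_law k mu))"
    by (simp add: nn_integral_multc)
  also have "\<dots> < \<infinity>"
    using finite Suc.IH by (simp add: ennreal_mult_less_top)
  finally show ?case .
qed

lemma nn_integral_sys_law_finite:
  fixes F :: "nat \<Rightarrow> ennreal"
  assumes "mono F" and submult: "\<And>x y. F (x + y) \<le> F x * F y" and "F 0 < \<infinity>"
    and finite: "(\<integral>\<^sup>+x. F x \<partial>measure_pmf mu0) < \<infinity>"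
  shows "(\<integral>\<^sup>+x. F x \<partial>measure_pmf (sys_law m mu0 n)) < \<infinity>"
proof (induction n)
  case 0
  then show ?case using finite by simp
next
  case (Suc n)
  have "(\<integral>\<^sup>+x. F x \<partial>measure_pmf (sys_law m mu0 (Suc n)))
      = (\<integral>\<^sup>+x. F (x - 1) \<partial>measure_pmf (sum_law m (sys_law m mu0 n)))"
    by simp
  also have "\<dots> \<le> (\<integral>\<^sup>+x. F x \<partial>measure_pmf (sum_law m (sys_law m mu0 n)))"
    by (intro nn_integral_mono monoD[OF \<open>mono F\<close>]) simp
  also have "\<dots> < \<infinity>"
    by (rule nn_integral_sum_law_finite[OF submult \<open>F 0 < \<infinity>\<close> Suc.IH])
  finally show ?case .
qed

lemma nn_integral_init_law_finite:
  fixes F :: "nat \<Rightarrow> ennreal"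
  assumes "F 0 < \<infinity>" and "(\<integral>\<^sup>+x. F x \<partial>measure_pmf Xs) < \<infinity>"
  shows "(\<integral>\<^sup>+x. F x \<partial>measure_pmf (init_law p Xs)) < \<infinity>"
proof -
  have "(\<integral>\<^sup>+x. F x \<partial>measure_pmf (init_law p Xs))
      = (\<integral>\<^sup>+b. (\<integral>\<^sup>+x. F x \<partial>measure_pmf (if b then Xs else return_pmf 0)) \<partial>measure_pmf (bernoulli_pmf p))"
    by (simp add: init_law_def)
  also have "\<dots> \<le> (\<integral>\<^sup>+b. (\<integral>\<^sup>+x. F x \<partial>measure_pmf Xs) + F 0 \<partial>measure_pmf (bernoulli_pmf p))"
    by (intro nn_integral_mono) (simp add: add_increasing add_increasing2)
  also have "\<dots> = (\<integral>\<^sup>+x. F x \<partial>measure_pmf Xs) + F 0"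
    by (simp add: measure_pmf.emeasure_space_1)
  also have "\<dots> < \<infinity>"
    using assms by simp
  finally show ?thesis .
qed

lemma power_weight_add_le:
  fixes M :: real
  assumes "M \<ge> 1"
  shows "ennreal ((real (x + y) + 1) * M ^ (x + y))
    \<le> ennreal ((real x + 1) * M ^ x) * ennreal ((real y + 1) * M ^ y)"
proof -
  have "(real (x + y) + 1) * (M ^ x * M ^ y) \<le> ((real x + 1) * (real y + 1)) * (M ^ x * M ^ y)"
    using assms by (intro mult_right_mono) (simp_all add: algebra_simps)
  then show ?thesis
    using assms by (simp add: ennreal_mult[symmetric] power_add mult_ac)
qed

lemma mono_power_weight:
  fixes M :: real
  assumes "M \<ge> 1"
  shows "mono (\<lambda>k. ennreal ((real k + 1) * M ^ k))"
  using assms by (intro monoI ennreal_leI mult_mono power_increasing) auto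

lemma integrable_iff_power_weight_finite:
  fixes M :: real
  assumes "M \<ge> 1"
  shows "integrable (measure_pmf mu) (\<lambda>k. real k * M ^ k)
    \<longleftrightarrow> (\<integral>\<^sup>+k. ennreal ((real k + 1) * M ^ k) \<partial>measure_pmf mu) < \<infinity>"
proof
  assume "integrable (measure_pmf mu) (\<lambda>k. real k * M ^ k)"
  then have "integrable (measure_pmf mu) (\<lambda>k. 1 + 2 * (real k * M ^ k))"
    by (intro Bochner_Integration.integrable_add integrable_mult_right) simp_all
  then have "(\<integral>\<^sup>+k. ennreal (norm (1 + 2 * (real k * M ^ k))) \<partial>measure_pmf mu) < \<infinity>"
    by (simp only: integrable_iff_bounded)
  moreover have "(\<integral>\<^sup>+k. ennreal ((real k + 1) * M ^ k) \<partial>measure_pmf mu)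
      \<le> (\<integral>\<^sup>+k. ennreal (norm (1 + 2 * (real k * M ^ k))) \<partial>measure_pmf mu)"
  proof (intro nn_integral_mono ennreal_leI)
    show "(real k + 1) * M ^ k \<le> norm (1 + 2 * (real k * M ^ k))" for k
      using power_le_one_plus_times_power[OF assms, of k] assms by (simp add: distrib_right)
  qed
  ultimately show "(\<integral>\<^sup>+k. ennreal ((real k + 1) * M ^ k) \<partial>measure_pmf mu) < \<infinity>"
    by (rule le_less_trans[rotated])
next
  assume finite: "(\<integral>\<^sup>+k. ennreal ((real k + 1) * M ^ k) \<partial>measure_pmf mu) < \<infinity>"
  have "(\<integral>\<^sup>+k. ennreal (norm (real k * M ^ k)) \<partial>measure_pmf mu)
      \<le> (\<integral>\<^sup>+k. ennreal ((real k + 1) * M ^ k) \<partial>measure_pmf mu)"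
    using assms by (intro nn_integral_mono ennreal_leI) (simp add: abs_mult)
  then show "integrable (measure_pmf mu) (\<lambda>k. real k * M ^ k)"
    unfolding integrable_iff_bounded using finite by simp
qed

theorem lemma3p4:
  fixes m :: nat and Xs :: "nat pmf" and p :: real and n :: nat and s :: real
  assumes "m \<ge> 2"
    and "set_pmf Xs \<subseteq> {1..}"
    and "measure_pmf.prob Xs {2..} > 0"
    and "integrable (measure_pmf Xs) (\<lambda>k. real k * real m ^ k)"
    and "p > p_crit m Xs" and "p \<le> 1"
    and "0 < s" and "s < real m"
  shows "(delta_c m (sys_law m (init_law p Xs) n) - phi_c m (sys_law m (init_law p Xs) n) s)^2
         \<le> 2 * (Hgf (sys_law m (init_law p Xs) n) 0 + delta_c m (sys_law m (init_law p Xs) n))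
             * Theta_c m (sys_law m (init_law p Xs) n) s"
proof -
  let ?w = "\<lambda>k. ennreal ((real k + 1) * real m ^ k)"
  have m: "real m \<ge> 1"
    using \<open>m \<ge> 2\<close> by simp
  have "(\<integral>\<^sup>+k. ?w k \<partial>measure_pmf Xs) < \<infinity>"
    using \<open>integrable (measure_pmf Xs) _\<close> integrable_iff_power_weight_finite[OF m] by simp
  then have "(\<integral>\<^sup>+k. ?w k \<partial>measure_pmf (sys_law m (init_law p Xs) n)) < \<infinity>"
    by (intro nn_integral_sys_law_finite nn_integral_init_law_finite mono_power_weight[OF m]
        power_weight_add_le[OF m]) simp_all
  then have "integrable (measure_pmf (sys_law m (init_law p Xs) n)) (\<lambda>k. real k * real m ^ k)"
    using integrable_iff_power_weight_finite[OF m] by simp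
  then show ?thesis
    by (rule delta_phi_sq_le_Theta[OF \<open>m \<ge> 2\<close> _ \<open>0 < s\<close> \<open>s < real m\<close>])
qed

end
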